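(* Consider the Best-I-Can-Afford (BICA) model with sellers of qualities $q_1,\dots,q_N$. (a) For any two sellers $i,j$ with $q_i>q_j$, seller $i$ weakly gradient-dominates seller $j$. (b) If moreover all qualities are distinct and the customers' willingness-to-pay distribution has a monotone hazard rate, then there exists a unique non-trivial local Nash equilibrium, and in it the sellers' prices are strictly increasing in their qualities (i.e., $q_i>q_j$ implies $p_i>p_j$).
   Context: There are $N$ sellers $\mathcal N=\{1,\dots,N\}$, each selling one item, and a unit mass of customers; prices lie in $[0,\bar v]$, $\mathbf p=(p_1,\dots,p_N)$. Seller $i$'s item has a quality $q_i$. BICA model: each customer has a willingness-to-pay $w_c$ drawn from a common distribution with CDF $F$ and density $f$ on $[0,\bar v]$ (density Lipschitz continuous); the customer considers exactly the sellers with $p_i\le w_c$ and buys the highest-quality item among them, breaking quality ties by lower price and then by an arbitrary fixed order; she buys nothing if no price is at most $w_c$. $R_i(\mathbf p)$ is seller $i$'s expected revenue (price times purchase probability), $g_i(p_i,\mathbf p_{-i})=\partial R_i(p,\mathbf p_{-i})/\partial p|_{p=p_i}$. Gradient dominance inequality: for sellers $i,j$, price $p\in(0,\bar v)$ and other prices $\mathbf p_{-\{i,j\}}$, the inequality is $g_i(p_i=p,p_j=0,\mathbf p_{-\{i,j\}})>\lim_{q\uparrow p}g_j(p_i=p,p_j=q,\mathbf p_{-\{i,j\}})$. A price vector is non-trivial if every seller setting a strictly positive price earns strictly positive revenue. Seller $i$ weakly gradient-dominates seller $j$ if the gradient dominance inequality holds for all $p\in(0,\bar v)$ and all $\mathbf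 p_{-\{i,j\}}$ for which the relevant price configuration is non-trivial (equivalently, for which seller $i$ pricing at $p$ earns strictly positive revenue). Local Nash equilibrium (LNE): $\mathbf p$ with $p_i\in[0,\bar v]$ such that there exist open neighborhoods $\mathcal U_i\subseteq\mathbb R$ with $p_i\in\mathcal U_i$ and $p_i\in\arg\max_{p\in\overline{\mathcal U_i}}R_i(p,\mathbf p_{-i})$ for all $i$. A distribution has a monotone hazard rate if $f(p)/(1-F(p))$ is non-decreasing in $p$. *)

theory Defs
  imports "HOL-Analysis.Analysis" "HOL-Library.FuncSet"
begin

text \<open>Customers' willingness-to-pay w has density f on [0, vbar].
  Ties in quality are broken by lower price, then by a fixed strict order given
  by an injective ranking tb on the sellers (smaller tb value wins).\<close>

definition sellers :: "nat \<Rightarrow> nat set" where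
  "sellers N = {1..N}"

definition bica_model ::
  "nat \<Rightarrow> real \<Rightarrow> (real \<Rightarrow> real) \<Rightarrow> (nat \<Rightarrow> nat) \<Rightarrow> bool" where
  "bica_model N vbar f tb \<longleftrightarrow>
     0 < vbar \<and>
     (\<forall>w\<in>{0..vbar}. 0 \<le> f w) \<and>
     (f has_integral 1) {0..vbar} \<and>
     (\<exists>L. L-lipschitz_on {0..vbar} f) \<and>
     inj_on tb (sellers N)"

definition cdf :: "(real \<Rightarrow> real) \<Rightarrow> real \<Rightarrow> real" where
  "cdf f x = integral {0..x} f"

definition preferred ::
  "(nat \<Rightarrow> real) \<Rightarrow> (nat \<Rightarrow> nat) \<Rightarrow> (nat \<Rightarrow> real) \<Rightarrow> nat \<Rightarrow> nat \<Rightarrow> bool" where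
  "preferred q tb p i k \<longleftrightarrow>
     q i > q k \<or> (q i = q k \<and> (p i < p k \<or> (p i = p k \<and> tb i < tb k)))"

definition buys ::
  "nat \<Rightarrow> (nat \<Rightarrow> real) \<Rightarrow> (nat \<Rightarrow> nat) \<Rightarrow> (nat \<Rightarrow> real) \<Rightarrow> real \<Rightarrow> nat \<Rightarrow> bool" where
  "buys N q tb p w i \<longleftrightarrow>
     i \<in> sellers N \<and> p i \<le> w \<and>
     (\<forall>k\<in>sellers N. k \<noteq> i \<longrightarrow> p k \<le> w \<longrightarrow> preferred q tb p i k)"

definition revenue ::
  "nat \<Rightarrow> real \<Rightarrow> (real \<Rightarrow> real) \<Rightarrow> (nat \<Rightarrow> real) \<Rightarrow> (nat \<Rightarrow> nat)
     \<Rightarrow> nat \<Rightarrow> (nat \<Rightarrow> real) \<Rightarrow> real" where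
  "revenue N vbar f q tb i p =
     p i * integral {0..vbar} (\<lambda>w. if buys N q tb p w i then f w else 0)"

definition grad ::
  "nat \<Rightarrow> real \<Rightarrow> (real \<Rightarrow> real) \<Rightarrow> (nat \<Rightarrow> real) \<Rightarrow> (nat \<Rightarrow> nat)
     \<Rightarrow> nat \<Rightarrow> (nat \<Rightarrow> real) \<Rightarrow> real" where
  "grad N vbar f q tb i p = deriv (\<lambda>x. revenue N vbar f q tb i (p(i := x))) (p i)"

definition nontrivial ::
  "nat \<Rightarrow> real \<Rightarrow> (real \<Rightarrow> real) \<Rightarrow> (nat \<Rightarrow> real) \<Rightarrow> (nat \<Rightarrow> nat) \<Rightarrow> (nat \<Rightarrow> real) \<Rightarrow> bool" where
  "nontrivial N vbar f q tb p \<longleftrightarrow>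
     (\<forall>i\<in>sellers N. 0 < p i \<longrightarrow> 0 < revenue N vbar f q tb i p)"

definition grad_dom_ineq ::
  "nat \<Rightarrow> real \<Rightarrow> (real \<Rightarrow> real) \<Rightarrow> (nat \<Rightarrow> real) \<Rightarrow> (nat \<Rightarrow> nat)
     \<Rightarrow> nat \<Rightarrow> nat \<Rightarrow> real \<Rightarrow> (nat \<Rightarrow> real) \<Rightarrow> bool" where
  "grad_dom_ineq N vbar f q tb i j p r \<longleftrightarrow>
     (\<exists>L. ((\<lambda>s. grad N vbar f q tb j (r(i := p, j := s))) \<longlongrightarrow> L) (at_left p) \<and>
          grad N vbar f q tb i (r(i := p, j := 0)) > L)"

definition weakly_grad_dominates ::
  "nat \<Rightarrow> real \<Rightarrow> (real \<Rightarrow> real) \<Rightarrow> (nat \<Rightarrow> real) \<Rightarrow> (nat \<Rightarrow> nat) \<Rightarrow> nat \<Rightarrow> nat \<Rightarrow> bool" where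
  "weakly_grad_dominates N vbar f q tb i j \<longleftrightarrow>
     (\<forall>p \<in> {0<..<vbar}. \<forall>r.
        (\<forall>k\<in>sellers N - {i, j}. r k \<in> {0..vbar}) \<longrightarrow>
        (\<forall>\<^sub>F s in at_left p. nontrivial N vbar f q tb (r(i := p, j := s))) \<longrightarrow>
        grad_dom_ineq N vbar f q tb i j p r)"

definition local_nash ::
  "nat \<Rightarrow> real \<Rightarrow> (real \<Rightarrow> real) \<Rightarrow> (nat \<Rightarrow> real) \<Rightarrow> (nat \<Rightarrow> nat) \<Rightarrow> (nat \<Rightarrow> real) \<Rightarrow> bool" where
  "local_nash N vbar f q tb p \<longleftrightarrow>
     (\<forall>i\<in>sellers N. p i \<in> {0..vbar} \<and>
        (\<exists>U. open U \<and> p i \<in> U \<and>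
           (\<forall>x\<in>closure U. revenue N vbar f q tb i (p(i := x)) \<le> revenue N vbar f q tb i p)))"

definition monotone_hazard_rate :: "real \<Rightarrow> (real \<Rightarrow> real) \<Rightarrow> bool" where
  "monotone_hazard_rate vbar f \<longleftrightarrow>
     mono_on {x \<in> {0..vbar}. cdf f x < 1} (\<lambda>x. f x / (1 - cdf f x))"

end

theory Submission
  imports Defs
begin

text \<open>A customer who can afford a strictly better seller buys there, so a seller whose better
  competitors all charge at least b, and whose equal-quality rivals charge more, earns
  x (F(b) - F(x)) at price x <= b.
  (a) With p_i = p and p_j = 0, seller i's derivative is F(b) - F(p) - p f(p), where F(b) > F(p)
  because i earns positive revenue; seller j, squeezed below p, has derivative
  F(p) - F(s) - s f(s), which tends to -p f(p) as s tends to p.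
  (b) Under a monotone hazard rate the first-order condition F(b) - F(x) = x f(x) has exactly one
  root in (0, b), the maximiser of x (F(b) - F(x)).  By induction on the quality rank, in every
  nontrivial local equilibrium the best seller charges this optimum for b = vbar, the next one the
  optimum for b equal to that price, and so on; conversely these prices form an equilibrium.\<close>

definition mass_below :: "real \<Rightarrow> (real \<Rightarrow> real) \<Rightarrow> real \<Rightarrow> real" where
  "mass_below vbar f t = integral {0..vbar} (\<lambda>w. if w < t then f w else 0)"

text \<open>The price vbar + 1 stands for ``no better seller'': nobody can afford it.\<close>
definition lowest_better_price ::
  "nat \<Rightarrow> real \<Rightarrow> (nat \<Rightarrow> real) \<Rightarrow> nat \<Rightarrow> (nat \<Rightarrow> real) \<Rightarrow> real" where
  "lowest_better_price N vbar q k p = Min (insert (vbar + 1) (p ` {l \<in> sellers N. q k < q l}))"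

lemma finite_sellers [simp]: "finite (sellers N)"
  by (simp add: sellers_def)

lemma DERIV_local_max_nhds:
  fixes g :: "real \<Rightarrow> real"
  assumes "(g has_real_derivative l) (at x)" and "\<forall>\<^sub>F y in nhds x. g y \<le> g x"
  shows "l = 0"
proof -
  obtain d where "0 < d" "\<forall>y. dist y x < d \<longrightarrow> g y \<le> g x"
    using assms(2) unfolding eventually_nhds_metric by blast
  then show ?thesis
    by (intro DERIV_local_max[OF assms(1), of d]) (auto simp: dist_real_def abs_minus_commute)
qed

lemma preferred_asym: "preferred q tb p k l \<Longrightarrow> \<not> preferred q tb p l k"
  by (auto simp: preferred_def)

lemma revenue_eq_0_if_beaten:
  assumes "l \<in> sellers N" "l \<noteq> k" "p l \<le> p k" "\<not> preferred q tb p k l"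
  shows "revenue N vbar f q tb k p = 0"
proof -
  have "\<not> buys N q tb p w k" for w
    using assms by (auto simp: buys_def)
  then show ?thesis
    by (simp add: revenue_def)
qed

lemma nontrivial_price_less_if_quality_le:
  assumes nt: "nontrivial N vbar f q tb p" and k: "k \<in> sellers N" and l: "l \<in> sellers N"
    and lk: "l \<noteq> k" and q: "q k \<le> q l" and pos: "0 < p k"
  shows "p k < p l"
proof (rule ccontr)
  assume "\<not> p k < p l"
  then have le: "p l \<le> p k" by simp
  show False
  proof (cases "preferred q tb p k l")
    case True
    then have "p k = p l"
      using le q by (auto simp: preferred_def)
    have "revenue N vbar f q tb l p = 0"
      by (rule revenue_eq_0_if_beaten[of k]) (use k lk \<open>p k = p l\<close> True preferred_asym in auto)
    moreover have "0 < revenue N vbar f q tb l p"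
      using nt l pos \<open>p k = p l\<close> unfolding nontrivial_def by auto
    ultimately show False by simp
  next
    case False
    have "revenue N vbar f q tb k p = 0"
      by (rule revenue_eq_0_if_beaten[of l]) (use l lk le False in auto)
    moreover have "0 < revenue N vbar f q tb k p"
      using nt k pos unfolding nontrivial_def by auto
    ultimately show False by simp
  qed
qed

lemma lowest_better_price_le:
  "\<lbrakk>l \<in> sellers N; q k < q l\<rbrakk> \<Longrightarrow> lowest_better_price N vbar q k p \<le> p l"
  unfolding lowest_better_price_def by (intro Min_le) auto

lemma lowest_better_price_attained:
  assumes "lowest_better_price N vbar q k p \<le> vbar"
  obtains l where "l \<in> sellers N" "q k < q l" "p l = lowest_better_price N vbar q k p"
proof -
  have "lowest_better_price N vbar q k p \<in> insert (vbar + 1) (p ` {l \<in> sellers N. q k < q l})"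
    unfolding lowest_better_price_def by (intro Min_in) auto
  then show ?thesis
    using assms that by force
qed

lemma buys_iff_between:
  assumes k: "k \<in> sellers N" and w: "w \<le> vbar"
    and equal_quality: "\<forall>l\<in>sellers N. l \<noteq> k \<longrightarrow> q l = q k \<longrightarrow> x < p l"
  shows "buys N q tb (p(k := x)) w k \<longleftrightarrow> x \<le> w \<and> w < lowest_better_price N vbar q k p"
    (is "?buys \<longleftrightarrow> _ \<and> w < ?b")
proof
  assume ?buys
  then have "x \<le> w" by (simp add: buys_def)
  moreover have "w < ?b"
  proof (rule ccontr)
    assume "\<not> w < ?b"
    then obtain l where l: "l \<in> sellers N" "q k < q l" "p l \<le> w"
      using w lowest_better_price_attained[of N vbar q k p] by (metis not_less order.trans)
    then have "preferred q tb (p(k := x)) k l"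
      using \<open>?buys\<close> by (auto simp: buys_def)
    then show False
      using l by (auto simp: preferred_def)
  qed
  ultimately show "x \<le> w \<and> w < ?b" ..
next
  assume x: "x \<le> w \<and> w < ?b"
  have "preferred q tb (p(k := x)) k l"
    if "l \<in> sellers N" "l \<noteq> k" "p l \<le> w" for l
  proof (cases "q k < q l")
    case True
    then show ?thesis
      using that x lowest_better_price_le[of l N q k vbar p] by simp
  next
    case False
    then show ?thesis
      using that x equal_quality by (auto simp: preferred_def)
  qed
  then show ?buys
    using k x by (auto simp: buys_def)
qed

definition quality_rank :: "nat \<Rightarrow> (nat \<Rightarrow> real) \<Rightarrow> nat \<Rightarrow> nat" where
  "quality_rank N q k = card {l \<in> sellers N. q k < q l}"

lemma quality_rank_less:
  assumes "i \<in> sellers N" "j \<in> sellers N" "q j < q i"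
  shows "quality_rank N q i < quality_rank N q j"
proof -
  have "{l \<in> sellers N. q i < q l} \<subset> {l \<in> sellers N. q j < q l}"
    using assms by auto
  then show ?thesis
    unfolding quality_rank_def by (intro psubset_card_mono) auto
qed

lemma quality_rank_Suc:
  assumes inj: "inj_on q (sellers N)" and k: "k \<in> sellers N"
    and rank: "quality_rank N q k = Suc m"
  obtains l where "l \<in> sellers N" "q k < q l" "quality_rank N q l = m"
proof -
  define H where "H = {l \<in> sellers N. q k < q l}"
  have fin: "finite H" by (simp add: H_def)
  have card: "card H = Suc m"
    using rank by (simp add: quality_rank_def H_def)
  then have "q ` H \<noteq> {}" by auto
  then have "Min (q ` H) \<in> q ` H"
    using fin by (intro Min_in) auto
  then obtain l where l: "l \<in> H" "q l = Min (q ` H)" by auto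
  have min: "q l \<le> q l'" if "l' \<in> H" for l'
    using l fin that by simp
  have "{l' \<in> sellers N. q l < q l'} = H - {l}"
  proof
    show "{l' \<in> sellers N. q l < q l'} \<subseteq> H - {l}"
      using l by (auto simp: H_def)
    show "H - {l} \<subseteq> {l' \<in> sellers N. q l < q l'}"
    proof
      fix l' assume l': "l' \<in> H - {l}"
      then have "q l \<noteq> q l'"
        using l inj by (auto simp: H_def inj_on_def)
      then show "l' \<in> {l' \<in> sellers N. q l < q l'}"
        using min[of l'] l' by (auto simp: H_def)
    qed
  qed
  then have "quality_rank N q l = m"
    using l fin card by (simp add: quality_rank_def)
  moreover have "l \<in> sellers N" "q k < q l"
    using l(1) by (auto simp: H_def)
  ultimately show ?thesis
    using that by blast
qed

definition critical_price :: "(real \<Rightarrow> real) \<Rightarrow> real \<Rightarrow> real \<Rightarrow> bool" where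
  "critical_price f b x \<longleftrightarrow> 0 < x \<and> x < b \<and> cdf f x < cdf f b \<and> cdf f b - cdf f x = x * f x"

locale wtp_density =
  fixes vbar :: real and f :: "real \<Rightarrow> real"
  assumes vbar_pos: "0 < vbar"
    and density_nonneg: "\<And>w. w \<in> {0..vbar} \<Longrightarrow> 0 \<le> f w"
    and density_integral: "(f has_integral 1) {0..vbar}"
    and density_continuous: "continuous_on {0..vbar} f"
begin

lemma integrable_density: "f integrable_on {a..b}" if "0 \<le> a" "b \<le> vbar"
proof -
  have "f integrable_on {0..vbar}"
    using density_integral by blast
  then show ?thesis
    by (rule integrable_on_subinterval) (use that in auto)
qed

lemma cdf_vbar: "cdf f vbar = 1"
  using density_integral by (simp add: cdf_def integral_unique)

lemma cdf_nonneg: "0 \<le> cdf f x" if "0 \<le> x" "x \<le> vbar"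
  unfolding cdf_def using that density_nonneg by (intro integral_nonneg integrable_density) auto

lemma cdf_mono: "cdf f x \<le> cdf f y" if "0 \<le> x" "x \<le> y" "y \<le> vbar"
proof -
  have "integral {0..x} f + integral {x..y} f = integral {0..y} f"
    using that integrable_density by (intro Henstock_Kurzweil_Integration.integral_combine) auto
  moreover have "0 \<le> integral {x..y} f"
    using that density_nonneg by (intro integral_nonneg integrable_density) auto
  ultimately show ?thesis
    unfolding cdf_def by linarith
qed

lemma cdf_le_1: "cdf f x \<le> 1" if "0 \<le> x" "x \<le> vbar"
  using cdf_mono[of x vbar] that cdf_vbar by simp

lemma continuous_on_cdf: "continuous_on {0..vbar} (cdf f)"
  unfolding cdf_def by (rule indefinite_integral_continuous_1) (use density_integral in blast)

lemma cdf_has_real_derivative: "(cdf f has_real_derivative f x) (at x)" if "0 < x" "x < vbar"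
proof -
  have "(cdf f has_real_derivative f x) (at x within {0..vbar})"
    using integral_has_vector_derivative[OF density_continuous, of x] that
    by (simp add: cdf_def[abs_def] has_real_derivative_iff_has_vector_derivative)
  then show ?thesis
    using that by (simp add: at_within_Icc_at)
qed

lemma eventually_cdf_less_at_right_0:
  assumes "0 < e"
  shows "\<forall>\<^sub>F x in at_right 0. cdf f x < e"
proof -
  have "(cdf f \<longlongrightarrow> cdf f 0) (at 0 within {0..vbar})"
    using continuous_on_cdf vbar_pos by (simp add: continuous_on_def)
  then have "(cdf f \<longlongrightarrow> 0) (at_right 0)"
    using vbar_pos by (simp add: at_within_Icc_at_right cdf_def)
  then show ?thesis
    using assms by (rule order_tendstoD)
qed

lemma eventually_below_cdf_at_right_0:
  assumes "0 < b" "0 < cdf f b"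
  shows "\<forall>\<^sub>F y in at_right 0. 0 < y \<and> y < b \<and> cdf f y < cdf f b"
  using assms by (intro eventually_conj eventually_at_right_less eventually_cdf_less_at_right_0)
    (auto simp: eventually_at_right_field)

lemma cdf_pos_if_density_pos:
  assumes "0 < x" "x < vbar" "0 < f x"
  shows "0 < cdf f x"
proof -
  obtain d where d: "0 < d" "\<And>h. 0 < h \<Longrightarrow> h < d \<Longrightarrow> cdf f (x - h) < cdf f x"
    using DERIV_pos_inc_left[OF cdf_has_real_derivative] assms by blast
  define h where "h = min (d / 2) (x / 2)"
  have "cdf f (x - h) < cdf f x"
    using d assms by (auto simp: h_def)
  moreover have "0 \<le> cdf f (x - h)"
    using assms d by (intro cdf_nonneg) (auto simp: h_def)
  ultimately show ?thesis by linarith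
qed

lemma integrable_below: "(\<lambda>w. if w < t then f w else 0) integrable_on {0..vbar}"
proof -
  define c where "c = max 0 (min t vbar)"
  have "f integrable_on {0..c}"
    using vbar_pos by (intro integrable_density) (auto simp: c_def)
  moreover have "{0..c} \<inter> {0..vbar} = {0..c}"
    using vbar_pos by (auto simp: c_def)
  ultimately have "(\<lambda>w. if w \<in> {0..c} then f w else 0) integrable_on {0..vbar}"
    by (metis integrable_restrict_Int)
  then show ?thesis
    by (rule integrable_spike[of _ _ "{0, c}"]) (auto simp: c_def)
qed

lemma mass_below_eq_cdf: "mass_below vbar f t = cdf f t" if "0 \<le> t" "t \<le> vbar"
proof -
  have "mass_below vbar f t = integral {0..vbar} (\<lambda>w. if w \<in> {0..t} then f w else 0)"
    unfolding mass_below_def by (rule integral_spike[of "{t}"]) auto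
  also have "\<dots> = integral {0..t} f"
    unfolding integral_restrict_Int using that by (simp add: Int_absorb2)
  finally show ?thesis
    by (simp add: cdf_def)
qed

lemma mass_below_beyond: "mass_below vbar f t = 1" if "vbar < t"
  using that cdf_vbar unfolding mass_below_def cdf_def
  by (subst integral_cong[where g = f]) auto

lemma integral_between:
  assumes "x \<le> b"
  shows "integral {0..vbar} (\<lambda>w. if x \<le> w \<and> w < b then f w else 0)
    = mass_below vbar f b - mass_below vbar f x"
proof -
  have "integral {0..vbar} (\<lambda>w. if x \<le> w \<and> w < b then f w else 0)
     = integral {0..vbar} (\<lambda>w. (if w < b then f w else 0) - (if w < x then f w else 0))"
    using assms by (intro integral_cong) auto
  also have "\<dots> = mass_below vbar f b - mass_below vbar f x"
    unfolding mass_below_def by (intro integral_diff integrable_below)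
  finally show ?thesis .
qed

lemma revenue_eq_mass_between:
  assumes k: "k \<in> sellers N"
    and equal_quality: "\<forall>l\<in>sellers N. l \<noteq> k \<longrightarrow> q l = q k \<longrightarrow> x < p l"
  defines "b \<equiv> lowest_better_price N vbar q k p"
  shows "revenue N vbar f q tb k (p(k := x))
    = (if x \<le> b then x * (mass_below vbar f b - mass_below vbar f x) else 0)"
proof -
  have "revenue N vbar f q tb k (p(k := x))
      = x * integral {0..vbar} (\<lambda>w. if x \<le> w \<and> w < b then f w else 0)"
    unfolding revenue_def b_def
    using buys_iff_between[OF k _ equal_quality, where tb = tb and vbar = vbar]
    by (intro arg_cong2[where f = "(*)"] integral_cong) auto
  moreover have "integral {0..vbar} (\<lambda>w. if x \<le> w \<and> w < b then f w else 0) = 0" if "b < x"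
    using that by (subst integral_cong[where g = "\<lambda>_. 0"]) auto
  ultimately show ?thesis
    using integral_between[of x b] by auto
qed

lemma DERIV_price_times_mass_above:
  assumes "0 < x" "x < vbar"
  shows "((\<lambda>y. y * (C - cdf f y)) has_real_derivative C - cdf f x - x * f x) (at x)"
proof -
  have "((\<lambda>y. y * (C - cdf f y)) has_real_derivative 1 * (C - cdf f x) + (0 - f x) * x) (at x)"
    by (intro DERIV_mult DERIV_ident DERIV_diff DERIV_const cdf_has_real_derivative assms)
  then show ?thesis
    by (simp add: algebra_simps)
qed

lemma grad_eq_below_competitors:
  assumes k: "k \<in> sellers N" and pos: "0 < p k" and less_vbar: "p k < vbar"
    and below: "p k < lowest_better_price N vbar q k p"
    and equal_quality: "\<forall>l\<in>sellers N. l \<noteq> k \<longrightarrow> q l = q k \<longrightarrow> p k < p l"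
  shows "grad N vbar f q tb k p
    = mass_below vbar f (lowest_better_price N vbar q k p) - cdf f (p k) - p k * f (p k)"
proof -
  define b where "b = lowest_better_price N vbar q k p"
  define E where "E = {l \<in> sellers N. l \<noteq> k \<and> q l = q k}"
  have near: "((\<lambda>x. x) \<longlongrightarrow> p k) (nhds (p k))"
    by (rule filterlim_ident)
  have "\<forall>\<^sub>F x in nhds (p k). 0 < x \<and> x < vbar \<and> x < b \<and> (\<forall>l\<in>E. x < p l)"
    using pos less_vbar below equal_quality
    by (intro eventually_conj eventually_ball_finite ballI order_tendstoD[OF near])
      (auto simp: b_def E_def)
  then have "\<forall>\<^sub>F x in nhds (p k).
      revenue N vbar f q tb k (p(k := x)) = x * (mass_below vbar f b - cdf f x)"
  proof (rule eventually_mono)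
    fix x assume x: "0 < x \<and> x < vbar \<and> x < b \<and> (\<forall>l\<in>E. x < p l)"
    then show "revenue N vbar f q tb k (p(k := x)) = x * (mass_below vbar f b - cdf f x)"
      using revenue_eq_mass_between[OF k, where p = p and x = x and tb = tb] mass_below_eq_cdf[of x]
      by (auto simp: b_def E_def)
  qed
  then have "((\<lambda>x. revenue N vbar f q tb k (p(k := x))) has_real_derivative
      mass_below vbar f b - cdf f (p k) - p k * f (p k)) (at (p k))"
    using DERIV_price_times_mass_above[OF pos less_vbar] by (simp add: DERIV_cong_ev)
  then show ?thesis
    unfolding grad_def b_def by (rule DERIV_imp_deriv)
qed

lemma grad_dominator_gt:
  assumes i: "i \<in> sellers N" and qij: "q j < q i" and p: "0 < p" "p < vbar"
    and better: "\<And>l. l \<in> sellers N \<Longrightarrow> l \<noteq> i \<Longrightarrow> q i \<le> q l \<Longrightarrow> p < r l"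
    and sells: "0 < revenue N vbar f q tb i (r(i := p, j := s))"
  shows "- (p * f p) < grad N vbar f q tb i (r(i := p, j := 0))"
proof -
  define V where "V t = r(i := p, j := t)" for t
  have V: "V t i = p" "l \<noteq> i \<Longrightarrow> l \<noteq> j \<Longrightarrow> V t l = r l" for t l
    using qij by (auto simp: V_def)
  define b where "b = lowest_better_price N vbar q i r"
  have "V t ` {l \<in> sellers N. q i < q l} = r ` {l \<in> sellers N. q i < q l}" for t
    using qij by (intro image_cong) (auto intro: V(2))
  then have lbp: "lowest_better_price N vbar q i (V t) = b" for t
    by (simp add: lowest_better_price_def b_def)
  have "p < r l" if "l \<in> {l \<in> sellers N. q i < q l}" for l
    using that by (intro better) auto
  then have pb: "p < b"
    using p by (auto simp: b_def lowest_better_price_def)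
  have equal: "\<forall>l\<in>sellers N. l \<noteq> i \<longrightarrow> q l = q i \<longrightarrow> p < V t l" for t
  proof (intro ballI impI)
    fix l assume l: "l \<in> sellers N" "l \<noteq> i" "q l = q i"
    then have "l \<noteq> j"
      using qij by auto
    then show "p < V t l"
      using better[OF l(1,2)] l V(2) by simp
  qed
  have "(V s)(i := p) = V s"
    using V(1)[of s] by (metis fun_upd_triv)
  then have "0 < revenue N vbar f q tb i ((V s)(i := p))"
    using sells by (simp add: V_def)
  also have "revenue N vbar f q tb i ((V s)(i := p)) = p * (mass_below vbar f b - cdf f p)"
    using revenue_eq_mass_between[OF i equal] lbp pb p mass_below_eq_cdf[of p] by auto
  finally have "cdf f p < mass_below vbar f b"
    using p by (simp add: zero_less_mult_iff)
  moreover have "grad N vbar f q tb i (V 0) = mass_below vbar f b - cdf f p - p * f p"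
    using grad_eq_below_competitors[OF i, of "V 0"] p pb equal lbp V by auto
  ultimately show ?thesis
    by (simp add: V_def)
qed

lemma grad_dominated_tendsto:
  assumes i: "i \<in> sellers N" and j: "j \<in> sellers N" and qij: "q j < q i"
    and p: "0 < p" "p < vbar"
    and better: "\<And>l. l \<in> sellers N \<Longrightarrow> l \<noteq> i \<Longrightarrow> l \<noteq> j \<Longrightarrow> q j \<le> q l \<Longrightarrow> p \<le> r l"
  shows "((\<lambda>s. grad N vbar f q tb j (r(i := p, j := s))) \<longlongrightarrow> - (p * f p)) (at_left p)"
proof -
  define V where "V s = r(i := p, j := s)" for s
  have V: "V s i = p" "V s j = s" "l \<noteq> i \<Longrightarrow> l \<noteq> j \<Longrightarrow> V s l = r l" for s l
    using qij by (auto simp: V_def)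
  have lbp: "lowest_better_price N vbar q j (V s) = p" for s
    unfolding lowest_better_price_def
  proof (rule Min_eqI)
    have "V s i \<in> V s ` {l \<in> sellers N. q j < q l}"
      using i qij by blast
    then show "p \<in> insert (vbar + 1) (V s ` {l \<in> sellers N. q j < q l})"
      using V(1) by simp
    have "p \<le> V s l" if "l \<in> sellers N" "q j < q l" for l
    proof (cases "l = i")
      case False
      moreover have "l \<noteq> j"
        using that by auto
      ultimately show ?thesis
        using better[of l] that V(3) by simp
    qed (simp add: V(1))
    then show "p \<le> y" if "y \<in> insert (vbar + 1) (V s ` {l \<in> sellers N. q j < q l})" for y
      using that p by auto
  qed simp
  have grad: "grad N vbar f q tb j (V s) = cdf f p - cdf f s - s * f s" if s: "0 < s" "s < p" for s
  proof -
    have "\<forall>l\<in>sellers N. l \<noteq> j \<longrightarrow> q l = q j \<longrightarrow> V s j < V s l"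
      using better qij V s by force
    then show ?thesis
      using grad_eq_below_competitors[OF j, of "V s"] lbp V s p mass_below_eq_cdf[of p] by auto
  qed
  have "isCont (cdf f) p" "isCont f p"
    using p cdf_has_real_derivative continuous_on_interior[OF density_continuous, of p]
    by (auto intro: DERIV_isCont)
  then have "isCont (\<lambda>s. cdf f p - cdf f s - s * f s) p"
    by (intro continuous_intros)
  then have "((\<lambda>s. cdf f p - cdf f s - s * f s) \<longlongrightarrow> - (p * f p)) (at_left p)"
    by (auto simp: isCont_def intro: filterlim_mono[OF _ order_refl at_le])
  moreover have "\<forall>\<^sub>F s in at_left p. cdf f p - cdf f s - s * f s = grad N vbar f q tb j (V s)"
    unfolding eventually_at_left_field using p grad by (intro exI[of _ 0]) auto
  ultimately show ?thesis
    unfolding V_def by (rule tendsto_cong[THEN iffD1, rotated])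
qed

text \<open>Nontriviality for s just below p pins down the competitors: sellers at least as good as i
  price above p (else i or they sell nothing), and sellers at least as good as j other than i
  price at least p (else j, priced between them and p, sells nothing).\<close>
lemma weakly_grad_dominates_if_quality_less:
  assumes i: "i \<in> sellers N" and j: "j \<in> sellers N" and qij: "q j < q i"
  shows "weakly_grad_dominates N vbar f q tb i j"
  unfolding weakly_grad_dominates_def
proof (intro ballI allI impI)
  fix p r
  assume p: "p \<in> {0<..<vbar}"
    and ev: "\<forall>\<^sub>F s in at_left p. nontrivial N vbar f q tb (r(i := p, j := s))"
  define V where "V s = r(i := p, j := s)" for s
  have V: "V s i = p" "V s j = s" "l \<noteq> i \<Longrightarrow> l \<noteq> j \<Longrightarrow> V s l = r l" for s l
    using qij by (auto simp: V_def)
  obtain a where a: "0 \<le> a" "a < p"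
    and nt: "\<And>s. a < s \<Longrightarrow> s < p \<Longrightarrow> nontrivial N vbar f q tb (V s)"
  proof -
    obtain a where "a < p" "\<forall>s>a. s < p \<longrightarrow> nontrivial N vbar f q tb (V s)"
      using ev unfolding eventually_at_left_field V_def by blast
    then show ?thesis
      using that[of "max a 0"] p by auto
  qed
  define s where "s = (a + p) / 2"
  have s: "a < s" "s < p"
    using a by (auto simp: s_def)
  have "p < r l" if l: "l \<in> sellers N" "l \<noteq> i" "q i \<le> q l" for l
  proof -
    have "l \<noteq> j"
      using l qij by auto
    have "V s i < V s l"
      by (rule nontrivial_price_less_if_quality_le[OF nt[OF s] i l(1,2)]) (use a s l V in auto)
    then show ?thesis
      using V(1) V(3)[OF l(2) \<open>l \<noteq> j\<close>] by simp
  qed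
  moreover have "0 < revenue N vbar f q tb i (V s)"
    using nt[OF s] i p V unfolding nontrivial_def by auto
  moreover have "p \<le> r l" if l: "l \<in> sellers N" "l \<noteq> i" "l \<noteq> j" "q j \<le> q l" for l
  proof (rule ccontr)
    assume "\<not> p \<le> r l"
    define t where "t = (max a (r l) + p) / 2"
    have t: "a < t" "t < p" "r l < t"
      using \<open>\<not> p \<le> r l\<close> a by (auto simp: t_def)
    have "V t j < V t l"
      by (rule nontrivial_price_less_if_quality_le[OF nt[OF t(1,2)] j l(1)]) (use a t l V in auto)
    then show False
      using t l V by auto
  qed
  ultimately show "grad_dom_ineq N vbar f q tb i j p r"
    unfolding grad_dom_ineq_def V_def using p grad_dominator_gt[OF i qij] grad_dominated_tendsto[OF i j qij]
    by (intro exI[of _ "- (p * f p)"]) auto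
qed

lemma exists_maximal_critical_price:
  assumes b: "0 < b" "b \<le> vbar" "0 < cdf f b"
  obtains x where "critical_price f b x"
    and "\<And>y. y \<in> {0..b} \<Longrightarrow> y * (cdf f b - cdf f y) \<le> x * (cdf f b - cdf f x)"
proof -
  define \<phi> where "\<phi> y = y * (cdf f b - cdf f y)" for y
  have "continuous_on {0..b} \<phi>"
    unfolding \<phi>_def using b
    by (intro continuous_intros continuous_on_subset[OF continuous_on_cdf]) auto
  then obtain x where x: "x \<in> {0..b}" and max: "\<And>y. y \<in> {0..b} \<Longrightarrow> \<phi> y \<le> \<phi> x"
    using continuous_attains_sup[of "{0..b}" \<phi>] b by auto
  obtain y where "0 < y" "y < b" "cdf f y < cdf f b"
    using eventually_happens'[OF trivial_limit_at_right_real eventually_below_cdf_at_right_0[OF b(1,3)]]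
    by blast
  then have "0 < \<phi> y" "\<phi> y \<le> \<phi> x"
    using max by (auto simp: \<phi>_def)
  then have "0 < \<phi> x" by linarith
  then have "0 < x" "cdf f x < cdf f b"
    using x by (auto simp: \<phi>_def zero_less_mult_iff)
  moreover have "x \<noteq> b"
    using \<open>0 < \<phi> x\<close> by (auto simp: \<phi>_def)
  ultimately have x_inner: "0 < x" "x < b" "cdf f x < cdf f b"
    using x by auto
  have "\<forall>\<^sub>F y in nhds x. y \<in> {0<..<b}"
    using x_inner by (intro eventually_nhds_in_open) auto
  then have "\<forall>\<^sub>F y in nhds x. \<phi> y \<le> \<phi> x"
    by (rule eventually_mono) (use max in auto)
  with DERIV_price_times_mass_above[of x "cdf f b"]
  have "cdf f b - cdf f x - x * f x = 0"
    using x_inner b unfolding \<phi>_def by (intro DERIV_local_max_nhds) auto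
  then have "critical_price f b x"
    using x_inner by (simp add: critical_price_def)
  then show ?thesis
    using that max unfolding \<phi>_def by blast
qed

end

lemma bica_model_imp_wtp_density: "bica_model N vbar f tb \<Longrightarrow> wtp_density vbar f"
  by unfold_locales (auto simp: bica_model_def intro: lipschitz_on_continuous_on)

definition optimal_price :: "(real \<Rightarrow> real) \<Rightarrow> real \<Rightarrow> real" where
  "optimal_price f b = (THE x. critical_price f b x)"

definition capped_revenue :: "(real \<Rightarrow> real) \<Rightarrow> real \<Rightarrow> real \<Rightarrow> real" where
  "capped_revenue f b x = (if x \<le> b then x * (cdf f b - cdf f x) else 0)"

text \<open>price_cap vbar f n is the price ceiling faced by the seller of quality rank n, namely
  the equilibrium price of the seller ranked just above it.\<close>
primrec price_cap :: "real \<Rightarrow> (real \<Rightarrow> real) \<Rightarrow> nat \<Rightarrow> real" where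
  "price_cap vbar f 0 = vbar"
| "price_cap vbar f (Suc n) = optimal_price f (price_cap vbar f n)"

definition equilibrium_prices :: "nat \<Rightarrow> real \<Rightarrow> (real \<Rightarrow> real) \<Rightarrow> (nat \<Rightarrow> real) \<Rightarrow> nat \<Rightarrow> real" where
  "equilibrium_prices N vbar f q = (\<lambda>k\<in>sellers N. price_cap vbar f (Suc (quality_rank N q k)))"

locale mhr_wtp_density = wtp_density +
  assumes mhr: "monotone_hazard_rate vbar f"
begin

text \<open>With u = 1 - F and c = 1 - F(b), the critical-point equation reads x h(x) = 1 - c / u(x)
  for the hazard rate h = f / u.  The left side increases strictly in x, the right side does not.\<close>
lemma critical_price_not_less:
  assumes b: "b \<le> vbar" and x1: "critical_price f b x1" and x2: "critical_price f b x2"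
    and less: "x1 < x2"
  shows False
proof -
  define u1 u2 c where "u1 = 1 - cdf f x1" and "u2 = 1 - cdf f x2" and "c = 1 - cdf f b"
  have c: "0 \<le> c" "c < u2"
    using cdf_le_1[of b] x2 b by (auto simp: c_def u2_def critical_price_def)
  have "u2 \<le> u1"
    using cdf_mono[of x1 x2] x1 x2 b less by (auto simp: u1_def u2_def critical_price_def)
  then have u: "0 < u2" "0 < u1" "u2 \<le> u1"
    using c by auto
  define h1 h2 where "h1 = f x1 / u1" and "h2 = f x2 / u2"
  have "x1 \<in> {x \<in> {0..vbar}. cdf f x < 1}" "x2 \<in> {x \<in> {0..vbar}. cdf f x < 1}"
    using x1 x2 b u by (auto simp: u1_def u2_def critical_price_def)
  then have "h1 \<le> h2"
    using mhr less unfolding monotone_hazard_rate_def h1_def h2_def u1_def u2_def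
    by (metis (no_types, lifting) mono_onD less_imp_le)
  have "0 \<le> h1"
    using density_nonneg[of x1] x1 b u by (auto simp: h1_def critical_price_def)
  have e1: "x1 * h1 = 1 - c / u1"
    using x1 u by (simp add: h1_def u1_def c_def critical_price_def field_simps)
  have e2: "x2 * h2 = 1 - c / u2"
    using x2 u by (simp add: h2_def u2_def c_def critical_price_def field_simps)
  have "c / u1 \<le> c / u2"
    using c u by (simp add: divide_left_mono)
  moreover have "0 < h2"
  proof (rule ccontr)
    assume "\<not> 0 < h2"
    then have "h1 = 0"
      using \<open>0 \<le> h1\<close> \<open>h1 \<le> h2\<close> by simp
    then have "f x1 = 0"
      using u by (simp add: h1_def)
    then show False
      using x1 unfolding critical_price_def by auto
  qed
  then have "x1 * h1 < x2 * h2"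
    using \<open>h1 \<le> h2\<close> x1 less
    by (metis critical_price_def mult_le_cancel_left_pos mult_strict_right_mono order_le_less_trans)
  ultimately show False
    using e1 e2 by linarith
qed

lemma optimal_price_eqI:
  assumes "b \<le> vbar" "critical_price f b x"
  shows "optimal_price f b = x"
  unfolding optimal_price_def
proof (rule the_equality)
  show "critical_price f b x"
    by (rule assms(2))
  show "y = x" if "critical_price f b y" for y
    using assms that critical_price_not_less[of b] by (metis linorder_neqE)
qed

lemma
  assumes "0 < b" "b \<le> vbar" "0 < cdf f b"
  shows optimal_price_critical: "critical_price f b (optimal_price f b)"
    and optimal_price_maximal: "y \<in> {0..b} \<Longrightarrow>
      y * (cdf f b - cdf f y) \<le> optimal_price f b * (cdf f b - cdf f (optimal_price f b))"
  using exists_maximal_critical_price[OF assms] optimal_price_eqI[OF assms(2)] by metis+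

lemma cdf_optimal_price_pos:
  assumes "0 < b" "b \<le> vbar" "0 < cdf f b"
  shows "0 < cdf f (optimal_price f b)"
proof -
  have crit: "critical_price f b (optimal_price f b)"
    by (rule optimal_price_critical[OF assms])
  then have "0 < optimal_price f b * f (optimal_price f b)" "0 < optimal_price f b"
    by (auto simp: critical_price_def)
  then have "0 < f (optimal_price f b)"
    by (simp add: zero_less_mult_iff)
  then show ?thesis
    using crit assms by (intro cdf_pos_if_density_pos) (auto simp: critical_price_def)
qed

lemma price_cap_bounds:
  "0 < price_cap vbar f n \<and> price_cap vbar f n \<le> vbar \<and> 0 < cdf f (price_cap vbar f n)"
proof (induction n)
  case 0
  then show ?case
    using vbar_pos cdf_vbar by simp
next
  case (Suc n)
  then show ?case
    using optimal_price_critical[of "price_cap vbar f n"] cdf_optimal_price_pos[of "price_cap vbar f n"]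
    by (auto simp: critical_price_def)
qed

lemma price_cap_Suc_less: "price_cap vbar f (Suc n) < price_cap vbar f n"
  using optimal_price_critical[of "price_cap vbar f n"] price_cap_bounds[of n]
  by (simp add: critical_price_def)

lemma price_cap_strict_antimono: "m < n \<Longrightarrow> price_cap vbar f n < price_cap vbar f m"
proof (induction n)
  case (Suc n)
  then show ?case
    using price_cap_Suc_less[of n] by (cases "m = n") auto
qed simp

lemma price_cap_antimono: "m \<le> n \<Longrightarrow> price_cap vbar f n \<le> price_cap vbar f m"
  using price_cap_strict_antimono[of m n] by (cases "m = n") auto

lemma capped_revenue_le_optimal_price:
  assumes b: "0 < b" "b \<le> vbar" "0 < cdf f b" and x: "0 \<le> x"
  shows "capped_revenue f b x \<le> capped_revenue f b (optimal_price f b)"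
  using optimal_price_critical[OF b] optimal_price_maximal[OF b, of x] x
  by (auto simp: capped_revenue_def critical_price_def)

lemma capped_revenue_optimal_price_pos:
  assumes "0 < b" "b \<le> vbar" "0 < cdf f b"
  shows "0 < capped_revenue f b (optimal_price f b)"
  using optimal_price_critical[OF assms] by (auto simp: capped_revenue_def critical_price_def)

lemma local_max_capped_revenue_eq_optimal_price:
  assumes b: "0 < b" "b \<le> vbar" "0 < cdf f b" and x: "0 \<le> x"
    and local_max: "\<forall>\<^sub>F y in nhds x. y \<in> {0..vbar} \<longrightarrow> capped_revenue f b y \<le> capped_revenue f b x"
    and pos: "0 < x \<Longrightarrow> 0 < capped_revenue f b x"
  shows "x = optimal_price f b"
proof -
  have "x \<noteq> 0"
  proof
    assume "x = 0"
    then have "\<forall>\<^sub>F y in nhds 0. y \<in> {0..vbar} \<longrightarrow> capped_revenue f b y \<le> 0"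
      using local_max b by (simp add: capped_revenue_def[of _ _ 0])
    then have "\<forall>\<^sub>F y in at_right 0. y \<in> {0..vbar} \<longrightarrow> capped_revenue f b y \<le> 0"
      unfolding eventually_at_filter by (rule eventually_mono) simp
    moreover note eventually_below_cdf_at_right_0[OF b(1,3)]
    ultimately have "\<forall>\<^sub>F y in at_right 0. 0 < y \<and> y < b \<and> cdf f y < cdf f b
        \<and> (y \<in> {0..vbar} \<longrightarrow> capped_revenue f b y \<le> 0)"
      by (rule eventually_conj[THEN eventually_mono]) simp
    then obtain y where "0 < y" "y < b" "cdf f y < cdf f b"
      "y \<in> {0..vbar} \<longrightarrow> capped_revenue f b y \<le> 0"
      using eventually_happens'[OF trivial_limit_at_right_real] by blast
    then show False
      using b by (simp add: capped_revenue_def mult_le_0_iff)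
  qed
  then have "0 < capped_revenue f b x"
    using x pos by simp
  then have "x \<le> b" "cdf f x < cdf f b" "x \<noteq> b"
    using x by (auto simp: capped_revenue_def zero_less_mult_iff split: if_splits)
  then have x_inner: "0 < x" "x < b" "cdf f x < cdf f b"
    using x \<open>x \<noteq> 0\<close> by auto
  have "\<forall>\<^sub>F y in nhds x. y \<in> {0<..<b}"
    using x_inner by (intro eventually_nhds_in_open) auto
  with local_max have "\<forall>\<^sub>F y in nhds x. y * (cdf f b - cdf f y) \<le> x * (cdf f b - cdf f x)"
    by eventually_elim (use x_inner b in \<open>auto simp: capped_revenue_def\<close>)
  with DERIV_price_times_mass_above[of x "cdf f b"]
  have "cdf f b - cdf f x - x * f x = 0"
    using x_inner b by (intro DERIV_local_max_nhds) auto
  then have "critical_price f b x"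
    using x_inner by (simp add: critical_price_def)
  then show ?thesis
    using optimal_price_eqI[OF b(2)] by simp
qed

lemma lowest_better_price_at_caps:
  assumes inj: "inj_on q (sellers N)" and k: "k \<in> sellers N"
    and better: "\<And>l. l \<in> sellers N \<Longrightarrow> q k < q l
      \<Longrightarrow> p l = price_cap vbar f (Suc (quality_rank N q l))"
  shows "lowest_better_price N vbar q k p = (if quality_rank N q k = 0 then vbar + 1
    else price_cap vbar f (quality_rank N q k))"
proof (cases "quality_rank N q k")
  case 0
  then have none: "{l \<in> sellers N. q k < q l} = {}"
    by (simp add: quality_rank_def)
  show ?thesis
    unfolding lowest_better_price_def none using 0 by simp
next
  case (Suc m)
  obtain l0 where l0: "l0 \<in> sellers N" "q k < q l0" "quality_rank N q l0 = m"
    using quality_rank_Suc[OF inj k Suc] .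
  have "Min (insert (vbar + 1) (p ` {l \<in> sellers N. q k < q l})) = price_cap vbar f (Suc m)"
  proof (rule Min_eqI)
    have "price_cap vbar f (Suc m) \<le> p l" if "l \<in> sellers N" "q k < q l" for l
    proof -
      have "price_cap vbar f (Suc m) \<le> price_cap vbar f (Suc (quality_rank N q l))"
        using quality_rank_less[OF that(1) k that(2)] Suc by (intro price_cap_antimono) simp
      then show ?thesis
        using better[OF that] by linarith
    qed
    then show "price_cap vbar f (Suc m) \<le> y"
      if "y \<in> insert (vbar + 1) (p ` {l \<in> sellers N. q k < q l})" for y
      using that price_cap_bounds[of "Suc m"] by auto
    show "price_cap vbar f (Suc m) \<in> insert (vbar + 1) (p ` {l \<in> sellers N. q k < q l})"
      using better[OF l0(1,2)] l0 by force
  qed simp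
  then show ?thesis
    using Suc by (simp add: lowest_better_price_def)
qed

lemma revenue_at_caps:
  assumes inj: "inj_on q (sellers N)" and k: "k \<in> sellers N"
    and better: "\<And>l. l \<in> sellers N \<Longrightarrow> q k < q l
      \<Longrightarrow> p l = price_cap vbar f (Suc (quality_rank N q l))"
    and x: "x \<in> {0..vbar}"
  shows "revenue N vbar f q tb k (p(k := x))
    = capped_revenue f (price_cap vbar f (quality_rank N q k)) x"
proof -
  define b where "b = lowest_better_price N vbar q k p"
  define B where "B = price_cap vbar f (quality_rank N q k)"
  have "\<forall>l\<in>sellers N. l \<noteq> k \<longrightarrow> q l = q k \<longrightarrow> x < p l"
    using inj k by (auto simp: inj_on_def)
  then have rev: "revenue N vbar f q tb k (p(k := x))
      = (if x \<le> b then x * (mass_below vbar f b - cdf f x) else 0)"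
    using revenue_eq_mass_between[OF k] mass_below_eq_cdf[of x] x by (simp add: b_def)
  have "mass_below vbar f b = cdf f B \<and> (x \<le> b \<longleftrightarrow> x \<le> B)"
  proof (cases "quality_rank N q k = 0")
    case True
    then show ?thesis
      using lowest_better_price_at_caps[OF inj k better] mass_below_beyond[of "vbar + 1"] cdf_vbar x
      by (simp add: b_def B_def)
  next
    case False
    have "0 \<le> B" "B \<le> vbar"
      using price_cap_bounds[of "quality_rank N q k"] by (auto simp: B_def)
    then show ?thesis
      using False lowest_better_price_at_caps[OF inj k better] mass_below_eq_cdf[of B]
      by (simp add: b_def B_def)
  qed
  then show ?thesis
    using rev by (simp add: capped_revenue_def B_def)
qed

lemma equilibrium_prices_strict_mono:
  assumes "i \<in> sellers N" "j \<in> sellers N" "q j < q i"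
  shows "equilibrium_prices N vbar f q j < equilibrium_prices N vbar f q i"
  using assms quality_rank_less[OF assms] price_cap_strict_antimono
  by (simp add: equilibrium_prices_def del: price_cap.simps)

lemma equilibrium_prices_local_nash:
  assumes inj: "inj_on q (sellers N)"
  defines "e \<equiv> equilibrium_prices N vbar f q"
  shows "e \<in> sellers N \<rightarrow>\<^sub>E {0..vbar}" and "nontrivial N vbar f q tb e"
    and "local_nash N vbar f q tb e"
proof -
  have seller: "e k \<in> {0<..<vbar} \<and> 0 < revenue N vbar f q tb k e
      \<and> (\<forall>x\<in>{0..vbar}. revenue N vbar f q tb k (e(k := x)) \<le> revenue N vbar f q tb k e)"
    if k: "k \<in> sellers N" for k
  proof -
    define B where "B = price_cap vbar f (quality_rank N q k)"
    have B: "0 < B" "B \<le> vbar" "0 < cdf f B"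
      using price_cap_bounds by (auto simp: B_def)
    have ek: "e k = optimal_price f B"
      using k by (simp add: e_def equilibrium_prices_def B_def)
    have rev: "revenue N vbar f q tb k (e(k := x)) = capped_revenue f B x" if "x \<in> {0..vbar}" for x
      using revenue_at_caps[OF inj k _ that] by (simp add: B_def e_def equilibrium_prices_def)
    have "e k \<in> {0<..<vbar}"
      using optimal_price_critical[OF B] ek B by (auto simp: critical_price_def)
    moreover have "revenue N vbar f q tb k e = capped_revenue f B (e k)"
      using rev[of "e k"] calculation by simp
    ultimately show ?thesis
      using rev ek capped_revenue_le_optimal_price[OF B] capped_revenue_optimal_price_pos[OF B]
      by auto
  qed
  moreover have "e \<in> extensional (sellers N)"
    by (simp add: e_def equilibrium_prices_def)
  ultimately show "e \<in> sellers N \<rightarrow>\<^sub>E {0..vbar}"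
    by (auto simp: PiE_iff dest!: seller)
  show "nontrivial N vbar f q tb e"
    using seller by (simp add: nontrivial_def)
  have "closure {0<..<vbar} = {0..vbar}"
    using vbar_pos by simp
  then show "local_nash N vbar f q tb e"
    using seller unfolding local_nash_def
    by (intro ballI conjI exI[of _ "{0<..<vbar}"]) (auto dest!: seller)
qed

lemma local_nash_price_eq_price_cap:
  assumes inj: "inj_on q (sellers N)" and range: "p \<in> sellers N \<rightarrow>\<^sub>E {0..vbar}"
    and nt: "nontrivial N vbar f q tb p" and ln: "local_nash N vbar f q tb p"
    and k: "k \<in> sellers N"
    and better: "\<And>l. l \<in> sellers N \<Longrightarrow> q k < q l
      \<Longrightarrow> p l = price_cap vbar f (Suc (quality_rank N q l))"
  shows "p k = price_cap vbar f (Suc (quality_rank N q k))"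
proof -
  define B where "B = price_cap vbar f (quality_rank N q k)"
  have B: "0 < B" "B \<le> vbar" "0 < cdf f B"
    using price_cap_bounds by (auto simp: B_def)
  have rev: "revenue N vbar f q tb k (p(k := x)) = capped_revenue f B x" if "x \<in> {0..vbar}" for x
    using revenue_at_caps[OF inj k better that] by (simp add: B_def)
  have pk: "p k \<in> {0..vbar}"
    using range k by auto
  have rev_pk: "revenue N vbar f q tb k p = capped_revenue f B (p k)"
    using rev[OF pk] by simp
  have "\<exists>U. open U \<and> p k \<in> U \<and>
      (\<forall>x\<in>closure U. revenue N vbar f q tb k (p(k := x)) \<le> revenue N vbar f q tb k p)"
    using ln k unfolding local_nash_def by simp
  then obtain U where U: "open U" "p k \<in> U"
    and max: "\<And>x. x \<in> closure U \<Longrightarrow> revenue N vbar f q tb k (p(k := x)) \<le> revenue N vbar f q tb k p"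
    by blast
  have "\<forall>\<^sub>F x in nhds (p k). x \<in> U"
    using U by (rule eventually_nhds_in_open)
  then have "\<forall>\<^sub>F x in nhds (p k). x \<in> {0..vbar} \<longrightarrow> capped_revenue f B x \<le> capped_revenue f B (p k)"
  proof (rule eventually_mono, intro impI)
    fix x assume "x \<in> U" "x \<in> {0..vbar}"
    then show "capped_revenue f B x \<le> capped_revenue f B (p k)"
      using max[of x] closure_subset rev rev_pk by auto
  qed
  moreover have "0 < capped_revenue f B (p k)" if "0 < p k"
    using nt k that unfolding nontrivial_def rev_pk[symmetric] by blast
  ultimately have "p k = optimal_price f B"
    using pk by (intro local_max_capped_revenue_eq_optimal_price[OF B]) auto
  then show ?thesis
    by (simp add: B_def)
qed

lemma local_nash_eq_equilibrium_prices:
  assumes inj: "inj_on q (sellers N)" and range: "p \<in> sellers N \<rightarrow>\<^sub>E {0..vbar}"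
    and nt: "nontrivial N vbar f q tb p" and ln: "local_nash N vbar f q tb p"
  shows "p = equilibrium_prices N vbar f q"
proof -
  have "p k = price_cap vbar f (Suc n)" if "k \<in> sellers N" "quality_rank N q k = n" for k n
    using that
  proof (induction n arbitrary: k rule: less_induct)
    case (less n k)
    have "p l = price_cap vbar f (Suc (quality_rank N q l))" if "l \<in> sellers N" "q k < q l" for l
    proof -
      have "quality_rank N q l < n"
        using quality_rank_less[OF that(1) less.prems(1) that(2)] less.prems(2) by simp
      then show ?thesis
        using less.IH that(1) by blast
    qed
    then show ?case
      using local_nash_price_eq_price_cap[OF assms less.prems(1)] less.prems(2) by simp
  qed
  then show ?thesis
    using range by (auto simp: equilibrium_prices_def fun_eq_iff PiE_def extensional_def)
qed

lemma ex1_nontrivial_local_nash: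
  assumes inj: "inj_on q (sellers N)"
  shows "\<exists>!p. p \<in> sellers N \<rightarrow>\<^sub>E {0..vbar} \<and> nontrivial N vbar f q tb p \<and> local_nash N vbar f q tb p"
  by (rule ex1I[of _ "equilibrium_prices N vbar f q"])
    (use equilibrium_prices_local_nash[OF inj] local_nash_eq_equilibrium_prices[OF inj] in blast)+

lemma nontrivial_local_nash_strict_mono:
  assumes "inj_on q (sellers N)" "p \<in> sellers N \<rightarrow>\<^sub>E {0..vbar}"
    and "nontrivial N vbar f q tb p" "local_nash N vbar f q tb p"
    and "i \<in> sellers N" "j \<in> sellers N" "q j < q i"
  shows "p j < p i"
  using local_nash_eq_equilibrium_prices[OF assms(1-4)] equilibrium_prices_strict_mono[OF assms(5-7)]
  by simp

end

theorem proposition4p4: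
  fixes N :: nat and vbar :: real and f :: "real \<Rightarrow> real"
    and q :: "nat \<Rightarrow> real" and tb :: "nat \<Rightarrow> nat"
  assumes model: "bica_model N vbar f tb"
  shows "(\<forall>i\<in>sellers N. \<forall>j\<in>sellers N. q i > q j \<longrightarrow> weakly_grad_dominates N vbar f q tb i j)
    \<and> ((inj_on q (sellers N) \<and> monotone_hazard_rate vbar f) \<longrightarrow>
        (\<exists>!p. p \<in> sellers N \<rightarrow>\<^sub>E {0..vbar} \<and> nontrivial N vbar f q tb p \<and> local_nash N vbar f q tb p)
        \<and> (\<forall>p. p \<in> sellers N \<rightarrow>\<^sub>E {0..vbar} \<and> nontrivial N vbar f q tb p \<and> local_nash N vbar f q tb p
               \<longrightarrow> (\<forall>i\<in>sellers N. \<forall>j\<in>sellers N. q i > q j \<longrightarrow> p i > p j)))"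
proof -
  interpret wtp_density vbar f
    using model by (rule bica_model_imp_wtp_density)
  have mhr: "mhr_wtp_density vbar f" if "monotone_hazard_rate vbar f"
    using that by unfold_locales
  show ?thesis
  proof (intro conjI impI ballI allI)
    fix i j
    assume "i \<in> sellers N" "j \<in> sellers N" "q j < q i"
    then show "weakly_grad_dominates N vbar f q tb i j"
      by (rule weakly_grad_dominates_if_quality_less)
  next
    assume "inj_on q (sellers N) \<and> monotone_hazard_rate vbar f"
    then show "\<exists>!p. p \<in> sellers N \<rightarrow>\<^sub>E {0..vbar} \<and> nontrivial N vbar f q tb p \<and> local_nash N vbar f q tb p"
      using mhr_wtp_density.ex1_nontrivial_local_nash[OF mhr] by blast
  next
    fix p i j
    assume "inj_on q (sellers N) \<and> monotone_hazard_rate vbar f"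
      and "p \<in> sellers N \<rightarrow>\<^sub>E {0..vbar} \<and> nontrivial N vbar f q tb p \<and> local_nash N vbar f q tb p"
      and "i \<in> sellers N" "j \<in> sellers N" "q j < q i"
    then show "p j < p i"
      using mhr_wtp_density.nontrivial_local_nash_strict_mono[OF mhr] by blast
  qed
qed

end
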